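(* If $A$ is any SIP subset of $\mathbb N$ (including $\mathbb N$ itself), then $A$ can be partitioned into two sets neither of which contains a translate of an SIP set. Consequently, the family of subsets of $\mathbb N$ that contain a translate of an SIP set is not a filterdual.
   Context: $\mathbb N=\{1,2,\dots\}$. For a finite $F\subset\mathbb Z$, $\sigma_F$ is the sum of its elements ($\sigma_\emptyset=0$); for $A\subset\mathbb Z$, $IP(A)=\{\sigma_F:F\subset A\text{ finite}\}$ and $SIP(A)=\{a-b:a,b\in IP(A)\}$. A set $B\subset\mathbb N$ is an SIP set if $SIP(L)\cap\mathbb N\subset B$ for some infinite $L\subset\mathbb N$. A set $B\subset\mathbb N$ contains a translate of an SIP set if there exist an infinite $L\subset\mathbb N$ and $u\in\mathbb Z$ with $(SIP(L)+u)\cap\mathbb N\subset B$. A family $\mathcal F$ of subsets of $\mathbb N$ (closed under supersets) is a filterdual if $A_1\cup A_2\in\mathcal F$ implies $A_1\in\mathcal F$ or $A_2\in\mathcal F$. *)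

theory Defs
  imports Main
begin

definition PosNat :: "int set" where
  "PosNat = {n. n \<ge> 1}"

definition IP :: "int set \<Rightarrow> int set" where
  "IP A = {\<Sum>F | F. F \<subseteq> A \<and> finite F}"

definition SIP :: "int set \<Rightarrow> int set" where
  "SIP A = {a - b | a b. a \<in> IP A \<and> b \<in> IP A}"

definition is_SIP_set :: "int set \<Rightarrow> bool" where
  "is_SIP_set B \<longleftrightarrow> B \<subseteq> PosNat \<and>
     (\<exists>L. L \<subseteq> PosNat \<and> infinite L \<and> SIP L \<inter> PosNat \<subseteq> B)"

definition contains_translate_SIP :: "int set \<Rightarrow> bool" where
  "contains_translate_SIP B \<longleftrightarrow>
     (\<exists>L u. L \<subseteq> PosNat \<and> infinite L \<and> ((\<lambda>x. x + u) ` SIP L) \<inter> PosNat \<subseteq> B)"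

definition filterdual :: "int set set \<Rightarrow> bool" where
  "filterdual \<F> \<longleftrightarrow> \<F> \<subseteq> Pow PosNat \<and>
     (\<forall>A B. A \<in> \<F> \<longrightarrow> A \<subseteq> B \<longrightarrow> B \<subseteq> PosNat \<longrightarrow> B \<in> \<F>) \<and>
     (\<forall>A1 A2. A1 \<union> A2 \<in> \<F> \<longrightarrow> A1 \<in> \<F> \<or> A2 \<in> \<F>)"

end

theory Submission
  imports Defs
begin

text \<open>Colour a positive integer by the parity of the number of blocks of 1s in its binary
  expansion.  Below a multiple \<open>y\<close> of a large power of 2, colours add: \<open>y + lo\<close> has colour
  \<open>colour y + colour lo\<close>, and \<open>y - lo\<close> has colour \<open>neg_colour y + neg_colour lo + 1\<close>,
  where \<open>neg_colour\<close> is the colour of the negative 2-adic integer (all mod 2).  An infinite \<open>L\<close>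
  contains three disjoint pairs whose differences \<open>d1 < d2 < d3\<close> are divisible by powers of 2
  that grow so fast that each \<open>d\<^sub>i\<close> is small compared with the next; all \<open>\<plusminus>d1 \<plusminus> d2 \<plusminus> d3\<close>
  lie in \<open>SIP L\<close>.  For a translate by \<open>u \<ge> 0\<close> to be monochromatic, the colours of
  \<open>d1, d2, d1 + d2\<close> force \<open>d2 - d1, d3 - d1, d3 - d2\<close> to have colour 0, i.e. the three values
  \<open>neg_colour d\<^sub>i\<close> would be pairwise distinct; for \<open>u < 0\<close> the numbers
  \<open>d1, d2, d3, d3 - d2 + d1\<close> give a similar contradiction.  So the colour classes split every
  set \<open>A\<close>, in particular \<open>PosNat\<close>.\<close>

text \<open>\<open>runs n\<close> counts the blocks of 1s in the binary expansion of \<open>n\<close>, each at its top bit.\<close>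
function runs :: "nat \<Rightarrow> nat" where
  "runs n = (if n = 0 then 0 else runs (n div 2) + (if odd n \<and> even (n div 2) then 1 else 0))"
  by auto
termination by (relation "measure id") auto

declare runs.simps[simp del]

lemma runs_0 [simp]: "runs 0 = 0"
  by (subst runs.simps) simp

lemma runs_rec: "runs n = runs (n div 2) + (if odd n \<and> even (n div 2) then 1 else 0)"
  by (cases "n = 0") (simp, subst runs.simps, simp)

text \<open>The top block of \<open>lo\<close> (if it reaches bit \<open>k - 1\<close>) merges with the bottom block of \<open>hi\<close>.\<close>
lemma runs_concat:
  "lo < 2 ^ k \<Longrightarrow>
    runs (hi * 2 ^ k + lo) + (if odd hi \<and> 2 ^ k \<le> 2 * lo then 1 else 0) = runs hi + runs lo"
proof (induction k arbitrary: lo)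
  case 0
  then show ?case by simp
next
  case (Suc k)
  show ?case
  proof (cases "k = 0")
    case True
    with Suc.prems have "lo = 0 \<or> lo = 1" by auto
    moreover have "runs (hi * 2 + 1) = runs hi + (if even hi then 1 else 0)"
      by (subst runs_rec) simp
    moreover have "runs (hi * 2) = runs hi"
      by (subst runs_rec) simp
    moreover have "runs 1 = 1"
      by (subst runs_rec) simp
    ultimately show ?thesis
      using True by auto
  next
    case False
    let ?n = "hi * 2 ^ Suc k + lo"
    have div: "?n div 2 = hi * 2 ^ k + lo div 2" by simp
    have odd_n: "odd ?n = odd lo" by simp
    have even_div: "even (hi * 2 ^ k + lo div 2) = even (lo div 2)" using False by simp
    have carry: "(2 ^ k \<le> 2 * (lo div 2)) = (2 ^ Suc k \<le> 2 * lo)"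
    proof -
      obtain t where "(2::nat) ^ k = 2 * t" using False by (metis dvd_power dvdE gr0I)
      then show ?thesis by auto
    qed
    have IH: "runs (hi * 2 ^ k + lo div 2) + (if odd hi \<and> 2 ^ k \<le> 2 * (lo div 2) then 1 else 0)
        = runs hi + runs (lo div 2)"
      using Suc by (intro Suc.IH) auto
    show ?thesis
      using IH runs_rec[of ?n] runs_rec[of lo] unfolding div odd_n even_div carry
      by (cases "odd lo \<and> even (lo div 2)"; cases "odd hi \<and> 2 ^ Suc k \<le> 2 * lo"; simp)
  qed
qed

lemma runs_mask: "k \<ge> 1 \<Longrightarrow> runs (2 ^ k - 1) = 1"
proof (induction k rule: dec_induct)
  case base
  then show ?case by (subst runs_rec) simp
next
  case (step k)
  obtain m where "(2::nat) ^ k = Suc m"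
    using not0_implies_Suc by fastforce
  then have "(2::nat) ^ Suc k - 1 = (2 ^ k - 1) * 2 + 1"
    by simp
  then have "runs (2 ^ Suc k - 1) = runs (2 ^ k - 1) + (if even (2 ^ k - 1 :: nat) then 1 else 0)"
    by (subst runs_rec) simp
  moreover have "odd ((2::nat) ^ k - 1)" using step(1) by simp
  ultimately show ?case using step by simp
qed

lemma runs_complement:
  "1 \<le> x \<Longrightarrow> 2 * x \<le> 2 ^ k \<Longrightarrow> runs (2 ^ k - x) = runs (x - 1) + (if odd x then 1 else 0)"
proof (induction k arbitrary: x)
  case 0
  then show ?case by simp
next
  case (Suc k)
  show ?case
  proof (cases "k = 0")
    case True
    with Suc.prems have "x = 1" by auto
    then show ?thesis using True by (simp, subst runs_rec, simp)
  next
    case False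
    define x' where "x' = (x + 1) div 2"
    obtain t where t: "(2::nat) ^ k = 2 * t" using False by (metis dvd_power dvdE gr0I)
    have x'_pos: "1 \<le> x'" using Suc.prems unfolding x'_def by auto
    have x_le: "x \<le> 2 * t" using Suc.prems t by simp
    have x'_le: "2 * x' \<le> 2 ^ k" using x_le unfolding t x'_def by presburger
    have t': "(2::nat) ^ Suc k = 4 * t" using t by simp
    have div: "(2 ^ Suc k - x) div 2 = 2 ^ k - x'" "(x - 1) div 2 = x' - 1"
      using Suc.prems(1) x_le unfolding t t' x'_def by presburger+
    have parity: "odd (2 ^ Suc k - x) = odd x" "even (2 ^ k - x') = even x'"
      "odd (x - 1) = even x" "even (x' - 1) = odd x'"
      using Suc.prems(1) x_le x'_pos x'_le unfolding t t' by presburger+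
    have IH: "runs (2 ^ k - x') = runs (x' - 1) + (if odd x' then 1 else 0)"
      using Suc.IH[OF x'_pos x'_le] .
    show ?thesis
      using runs_rec[of "2 ^ Suc k - x"] runs_rec[of "x - 1"] unfolding div parity IH
      by (cases "odd x"; cases "odd x'"; simp)
  qed
qed

definition colour :: "nat \<Rightarrow> bool" where
  "colour n \<longleftrightarrow> odd (runs n)"

text \<open>By \<open>runs_complement\<close>, \<open>neg_colour x\<close> is the negated colour of \<open>2 ^ k - x\<close> whenever
  \<open>2 * x \<le> 2 ^ k\<close>: the colour of the 2-adic integer \<open>-x\<close>, whose infinite top block is not counted.\<close>
definition neg_colour :: "nat \<Rightarrow> bool" where
  "neg_colour x \<longleftrightarrow> odd (runs (x - 1)) \<noteq> even x"

lemma colour_mult_pow2: "colour (hi * 2 ^ k) = colour hi"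
  using runs_concat[of 0 k hi] by (simp add: colour_def)

lemma neg_colour_mult_pow2:
  assumes "0 < x"
  shows "neg_colour (x * 2 ^ k) = neg_colour x"
proof (cases "k = 0")
  case False
  have split: "x * 2 ^ k - 1 = (x - 1) * 2 ^ k + (2 ^ k - 1)"
    using assms by (cases x) (auto simp: algebra_simps)
  have carry: "2 ^ k \<le> 2 * (2 ^ k - 1 :: nat)"
    using False by (cases k) auto
  have "runs (x * 2 ^ k - 1) + (if odd (x - 1) then 1 else 0) = runs (x - 1) + 1"
    using runs_concat[of "2 ^ k - 1" k "x - 1"] runs_mask[of k] False carry
    unfolding split by simp
  moreover have "odd (x - 1) = even x" using assms by auto
  ultimately show ?thesis
    using False unfolding neg_colour_def by (cases "even x") auto
qed simp

lemma colour_add_low: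
  assumes "2 ^ k dvd y" and "2 * lo < 2 ^ k"
  shows "colour (y + lo) = (colour y \<noteq> colour lo)"
proof -
  obtain hi where y: "y = hi * 2 ^ k"
    using assms(1) by (auto simp: mult.commute)
  have "runs (hi * 2 ^ k + lo) = runs hi + runs lo"
    using runs_concat[of lo k hi] assms(2) by simp
  then show ?thesis
    unfolding y colour_mult_pow2 by (simp add: colour_def)
qed

lemma neg_colour_add_low:
  assumes "2 ^ k dvd y" and "0 < lo" and "2 * lo < 2 ^ k"
  shows "neg_colour (y + lo) = (colour y \<noteq> neg_colour lo)"
proof -
  obtain hi where y: "y = hi * 2 ^ k"
    using assms(1) by (auto simp: mult.commute)
  have "lo - 1 < 2 ^ k" "\<not> 2 ^ k \<le> 2 * (lo - 1)"
    using assms(3) by auto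
  then have "runs (hi * 2 ^ k + (lo - 1)) = runs hi + runs (lo - 1)"
    using runs_concat[of "lo - 1" k hi] by simp
  moreover have "y + lo - 1 = hi * 2 ^ k + (lo - 1)"
    using assms(2) y by simp
  moreover have "even (y + lo) = even lo"
    using assms(1,2,3) by (cases k) auto
  ultimately show ?thesis
    using colour_mult_pow2[of hi k] unfolding y neg_colour_def colour_def by auto
qed

lemma colour_sub_low:
  assumes "2 ^ k dvd y" and "0 < y" and "0 < lo" and "2 * lo < 2 ^ k"
  shows "colour (y - lo) = (neg_colour y = neg_colour lo)"
proof -
  obtain hi where y: "y = hi * 2 ^ k" and hi: "0 < hi"
    using assms(1,2) by (auto simp: mult.commute)
  have split: "y - lo = (hi - 1) * 2 ^ k + (2 ^ k - lo)"
    using hi assms(4) unfolding y by (cases hi) (auto simp: algebra_simps)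
  have "2 ^ k - lo < 2 ^ k" "2 ^ k \<le> 2 * (2 ^ k - lo)"
    using assms(3,4) by auto
  then have "runs (y - lo) + (if odd (hi - 1) then 1 else 0) = runs (hi - 1) + runs (2 ^ k - lo)"
    using runs_concat[of "2 ^ k - lo" k "hi - 1"] unfolding split by simp
  moreover have "runs (2 ^ k - lo) = runs (lo - 1) + (if odd lo then 1 else 0)"
    using runs_complement[of lo k] assms(3,4) by simp
  moreover have "odd (hi - 1) = even hi" using hi by auto
  ultimately have "even (runs (y - lo) + (if even hi then 1 else 0))
      = even (runs (hi - 1) + runs (lo - 1) + (if odd lo then 1 else 0))"
    by simp
  moreover have "neg_colour y = neg_colour hi"
    unfolding y using neg_colour_mult_pow2[OF hi] .
  moreover have "even y" using assms(1,3,4) by (cases k) auto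
  ultimately show ?thesis
    unfolding colour_def neg_colour_def by (cases "even hi"; cases "even lo") auto
qed

locale lacunary_triple =
  fixes d1 d2 d3 s1 s2 s3 :: nat
  assumes pos: "0 < d1" "0 < d2" "0 < d3"
    and pow2_dvd: "2 ^ s1 dvd d1" "2 ^ s2 dvd d2" "2 ^ s3 dvd d3"
    and gap: "2 * d1 < 2 ^ s2" "2 * d2 < 2 ^ s3"
begin

lemma increasing: "d1 < d2" "d2 < d3"
  using gap dvd_imp_le[OF pow2_dvd(2) pos(2)] dvd_imp_le[OF pow2_dvd(3) pos(3)] by linarith+

lemma pow2_dvd_later: "2 ^ s1 dvd d2" "2 ^ s1 dvd d3" "2 ^ s2 dvd d3"
proof -
  have "(2::nat) ^ s1 < 2 ^ s2" "(2::nat) ^ s2 < 2 ^ s3"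
    using gap dvd_imp_le[OF pow2_dvd(1) pos(1)] dvd_imp_le[OF pow2_dvd(2) pos(2)] by linarith+
  then have "(2::nat) ^ s1 dvd 2 ^ s2" "(2::nat) ^ s2 dvd 2 ^ s3"
    by (simp_all add: le_imp_power_dvd)
  then show "2 ^ s1 dvd d2" "2 ^ s1 dvd d3" "2 ^ s2 dvd d3"
    using pow2_dvd by (meson dvd_trans)+
qed

lemma colour_combinations:
  "colour (d1 + d2) = (colour d1 \<noteq> colour d2)"
  "colour (d2 - d1) = (neg_colour d2 = neg_colour d1)"
  "colour (d3 - d1) = (neg_colour d3 = neg_colour d1)"
  "colour (d3 - d2) = (neg_colour d3 = neg_colour d2)"
  "neg_colour (d3 - d2 + d1) = (colour (d3 - d2) \<noteq> neg_colour d1)"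
proof -
  have gap13: "2 * d1 < 2 ^ s3" using gap increasing by linarith
  show "colour (d1 + d2) = (colour d1 \<noteq> colour d2)"
    using colour_add_low[OF pow2_dvd(2) gap(1)] by (auto simp: add.commute)
  show "colour (d2 - d1) = (neg_colour d2 = neg_colour d1)"
    by (rule colour_sub_low[OF pow2_dvd(2) pos(2,1) gap(1)])
  show "colour (d3 - d1) = (neg_colour d3 = neg_colour d1)"
    by (rule colour_sub_low[OF pow2_dvd(3) pos(3,1) gap13])
  show "colour (d3 - d2) = (neg_colour d3 = neg_colour d2)"
    by (rule colour_sub_low[OF pow2_dvd(3) pos(3,2) gap(2)])
  show "neg_colour (d3 - d2 + d1) = (colour (d3 - d2) \<noteq> neg_colour d1)"
    using dvd_diff_nat[OF pow2_dvd_later(3) pow2_dvd(2)] pos(1) gap(1) by (rule neg_colour_add_low)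
qed

lemma colour_not_constant_above:
  assumes "2 * U < 2 ^ s1"
  shows "\<not> (\<forall>d \<in> {d1, d2, d1 + d2, d2 - d1, d3 - d1, d3 - d2}. colour (U + d) = c)"
proof
  assume const: "\<forall>d \<in> {d1, d2, d1 + d2, d2 - d1, d3 - d1, d3 - d2}. colour (U + d) = c"
  have "\<forall>d \<in> {d1, d2, d1 + d2, d2 - d1, d3 - d1, d3 - d2}. 2 ^ s1 dvd d"
    using pow2_dvd(1) pow2_dvd_later by (auto intro: dvd_add dvd_diff_nat)
  then have "\<forall>d \<in> {d1, d2, d1 + d2, d2 - d1, d3 - d1, d3 - d2}. colour d = (c \<noteq> colour U)"
    using const colour_add_low[OF _ assms] by (metis add.commute)
  then show False
    using colour_combinations(1-4) by auto
qed

lemma colour_not_constant_below: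
  assumes "0 < U" and "2 * U < 2 ^ s1"
  shows "\<not> (\<forall>d \<in> {d1, d2, d3, d3 - d2 + d1}. colour (d - U) = c)"
proof
  assume const: "\<forall>d \<in> {d1, d2, d3, d3 - d2 + d1}. colour (d - U) = c"
  have "\<forall>d \<in> {d1, d2, d3, d3 - d2 + d1}. 2 ^ s1 dvd d \<and> 0 < d"
    using pow2_dvd(1) pow2_dvd_later pos by (auto intro: dvd_add dvd_diff_nat)
  then have "\<forall>d \<in> {d1, d2, d3, d3 - d2 + d1}. neg_colour d = (c = neg_colour U)"
    using const colour_sub_low[OF _ _ assms] by blast
  then show False
    using colour_combinations(4,5) by auto
qed

end

lemma IP_mono: "A \<subseteq> B \<Longrightarrow> IP A \<subseteq> IP B"
  unfolding IP_def by blast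

lemma SIP_mono: "A \<subseteq> B \<Longrightarrow> SIP A \<subseteq> SIP B"
  unfolding SIP_def using IP_mono by blast

lemma SIP_add_disjoint:
  assumes "A \<inter> B = {}" and "a \<in> SIP A" and "b \<in> SIP B"
  shows "a + b \<in> SIP (A \<union> B)"
proof -
  obtain P N where a: "a = \<Sum>P - \<Sum>N" "P \<subseteq> A" "N \<subseteq> A" "finite P" "finite N"
    using assms(2) unfolding SIP_def IP_def by blast
  obtain P' N' where b: "b = \<Sum>P' - \<Sum>N'" "P' \<subseteq> B" "N' \<subseteq> B" "finite P'" "finite N'"
    using assms(3) unfolding SIP_def IP_def by blast
  have "P \<inter> P' = {}" "N \<inter> N' = {}"
    using a b assms(1) by blast+
  then have "a + b = \<Sum>(P \<union> P') - \<Sum>(N \<union> N')"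
    using a b by (simp add: sum.union_disjoint)
  moreover have "\<Sum>(P \<union> P') \<in> IP (A \<union> B)" "\<Sum>(N \<union> N') \<in> IP (A \<union> B)"
    using a b unfolding IP_def by blast+
  ultimately show ?thesis
    unfolding SIP_def by blast
qed

lemma signed_diff_in_SIP:
  assumes "x \<in> A" and "z \<in> A" and "e \<in> {-1, 0, 1}"
  shows "e * (x - z) \<in> SIP A"
proof -
  have "\<Sum>{x} \<in> IP A" "\<Sum>{z} \<in> IP A" "\<Sum>{} \<in> IP A"
    using assms(1,2) unfolding IP_def by blast+
  then have "x - z \<in> SIP A" "z - x \<in> SIP A" "0 - 0 \<in> SIP A"
    unfolding SIP_def by force+
  then show ?thesis
    using assms(3) by auto
qed

lemma infinite_congruent_pair:
  fixes L :: "int set"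
  assumes "infinite L" and "finite E"
  obtains x z d where "x \<in> L - E" "z \<in> L - E" "x - z = int d" "0 < d" "2 ^ k dvd d"
proof -
  have inf: "infinite (L - E)"
    using assms by simp
  have fin: "finite ((\<lambda>n. n mod 2 ^ k) ` (L - E))"
    by (rule finite_subset[of _ "{0..<2 ^ k}"]) auto
  obtain a where a: "a \<in> L - E" and "infinite {b \<in> L - E. b mod 2 ^ k = a mod 2 ^ k}"
    using pigeonhole_infinite[OF inf fin] by blast
  then obtain b where b: "b \<in> L - E" "b mod 2 ^ k = a mod 2 ^ k" "b \<noteq> a"
    using infinite_imp_nonempty[of "{b \<in> L - E. b mod 2 ^ k = a mod 2 ^ k} - {a}"] by auto
  define x z where "x = max a b" and "z = min a b"
  have mem: "x \<in> L - E" "z \<in> L - E" and pos: "0 < x - z"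
    using a b unfolding x_def z_def by (auto simp: max_def min_def)
  have "(2::int) ^ k dvd x - z"
    using b(2) unfolding x_def z_def by (cases "a \<le> b") (auto simp: mod_eq_dvd_iff dvd_diff_commute)
  then have "int (2 ^ k) dvd int (nat (x - z))"
    using pos by simp
  then have "2 ^ k dvd nat (x - z)"
    by (simp only: int_dvd_int_iff)
  with mem pos show thesis
    by (intro that[of x z "nat (x - z)"]) simp_all
qed

lemma SIP_contains_lacunary_triple:
  fixes L :: "int set"
  assumes "infinite L"
  obtains d1 d2 d3 s2 s3 where "lacunary_triple d1 d2 d3 s1 s2 s3"
    and "\<And>e1 e2 e3. {e1, e2, e3} \<subseteq> {-1, 0, 1} \<Longrightarrow>
      e1 * int d1 + e2 * int d2 + e3 * int d3 \<in> SIP L"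
proof -
  obtain x1 z1 d1 where p1: "x1 \<in> L" "z1 \<in> L" "x1 - z1 = int d1" "0 < d1" "2 ^ s1 dvd d1"
    using infinite_congruent_pair[OF assms, of "{}" s1] by blast
  obtain x2 z2 d2 where p2: "x2 \<in> L - {x1, z1}" "z2 \<in> L - {x1, z1}" "x2 - z2 = int d2"
    "0 < d2" "2 ^ Suc d1 dvd d2"
    using infinite_congruent_pair[OF assms, of "{x1, z1}" "Suc d1"] by blast
  obtain x3 z3 d3 where p3: "x3 \<in> L - {x1, z1, x2, z2}" "z3 \<in> L - {x1, z1, x2, z2}"
    "x3 - z3 = int d3" "0 < d3" "2 ^ Suc d2 dvd d3"
    using infinite_congruent_pair[OF assms, of "{x1, z1, x2, z2}" "Suc d2"] by blast
  have "lacunary_triple d1 d2 d3 s1 (Suc d1) (Suc d2)"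
    using p1 p2 p3 less_exp[of d1] less_exp[of d2] by unfold_locales simp_all
  moreover have "e1 * int d1 + e2 * int d2 + e3 * int d3 \<in> SIP L"
    if "{e1, e2, e3} \<subseteq> {-1, 0, 1}" for e1 e2 e3
  proof -
    have "e1 * (x1 - z1) \<in> SIP {x1, z1}" "e2 * (x2 - z2) \<in> SIP {x2, z2}"
      "e3 * (x3 - z3) \<in> SIP {x3, z3}"
      using that by (auto intro: signed_diff_in_SIP)
    then have "e1 * (x1 - z1) + e2 * (x2 - z2) + e3 * (x3 - z3) \<in> SIP ({x1, z1} \<union> {x2, z2} \<union> {x3, z3})"
      using p2 p3 by (intro SIP_add_disjoint) auto
    moreover have "{x1, z1} \<union> {x2, z2} \<union> {x3, z3} \<subseteq> L"
      using p1 p2 p3 by blast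
    ultimately show ?thesis
      unfolding p1(3) p2(3) p3(3) using SIP_mono by blast
  qed
  ultimately show thesis
    by (rule that)
qed

lemma translate_SIP_meets_colour:
  assumes "infinite L"
  shows "\<exists>n \<in> (\<lambda>x. x + u) ` SIP L \<inter> PosNat. colour (nat n) = c"
proof (rule ccontr)
  assume "\<not> ?thesis"
  then have avoid: "colour (nat (u + int d)) = (\<not> c)" if "int d \<in> SIP L" "0 < u + int d" for d
    using that unfolding PosNat_def by (force simp: add.commute)
  define U where "U = nat \<bar>u\<bar>"
  have U_small: "2 * U < 2 ^ Suc U"
    using less_exp[of U] by simp
  obtain d1 d2 d3 s2 s3 where triple: "lacunary_triple d1 d2 d3 (Suc U) s2 s3"
    and comb: "\<And>e1 e2 e3. {e1, e2, e3} \<subseteq> {-1, 0, 1} \<Longrightarrow>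
      e1 * int d1 + e2 * int d2 + e3 * int d3 \<in> SIP L"
    using SIP_contains_lacunary_triple[OF assms] by metis
  interpret lacunary_triple d1 d2 d3 "Suc U" s2 s3
    by (fact triple)
  have U_less: "U < d1"
    using U_small dvd_imp_le[OF pow2_dvd(1) pos(1)] by linarith
  have "int d1 \<in> SIP L" "int d2 \<in> SIP L" "int d3 \<in> SIP L" "int (d1 + d2) \<in> SIP L"
    "int (d2 - d1) \<in> SIP L" "int (d3 - d1) \<in> SIP L" "int (d3 - d2) \<in> SIP L"
    using increasing comb[of 1 0 0] comb[of 0 1 0] comb[of 0 0 1] comb[of 1 1 0] comb[of "-1" 1 0]
      comb[of "-1" 0 1] comb[of 0 "-1" 1]
    by (simp_all add: of_nat_diff ac_simps)
  moreover have "int (d3 - d2 + d1) = 1 * int d1 + (-1) * int d2 + 1 * int d3"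
    using increasing by (simp add: of_nat_diff)
  then have "int (d3 - d2 + d1) \<in> SIP L"
    using comb[of 1 "-1" 1] by (simp only:) simp
  ultimately have in_SIP: "int d \<in> SIP L"
    if "d \<in> {d1, d2, d3, d1 + d2, d2 - d1, d3 - d1, d3 - d2, d3 - d2 + d1}" for d
    using that by blast
  show False
  proof (cases "0 \<le> u")
    case True
    have "colour (U + d) = (\<not> c)" if "d \<in> {d1, d2, d1 + d2, d2 - d1, d3 - d1, d3 - d2}" for d
    proof -
      have "int d \<in> SIP L"
        using that by (intro in_SIP) blast
      moreover have "0 < d"
        using that increasing pos by auto
      moreover have "u = int U"
        using True unfolding U_def by simp
      ultimately show ?thesis
        using avoid[of d] by (simp add: nat_add_distrib)
    qed
    then show False
      using colour_not_constant_above[OF U_small] by blast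
  next
    case False
    have "colour (d - U) = (\<not> c)" if "d \<in> {d1, d2, d3, d3 - d2 + d1}" for d
    proof -
      have "int d \<in> SIP L"
        using that by (intro in_SIP) blast
      moreover have "U < d"
        using that increasing U_less by auto
      moreover have "u = - int U"
        using False unfolding U_def by simp
      ultimately show ?thesis
        using avoid[of d] by (simp add: nat_diff_distrib of_nat_diff)
    qed
    moreover have "0 < U"
      using False unfolding U_def by simp
    ultimately show False
      using colour_not_constant_below[OF _ U_small] by blast
  qed
qed

lemma contains_translate_SIP_meets_colour:
  assumes "contains_translate_SIP B"
  shows "\<exists>n \<in> B. colour (nat n) = c"
proof -
  obtain L u where "infinite L" and "(\<lambda>x. x + u) ` SIP L \<inter> PosNat \<subseteq> B"
    using assms unfolding contains_translate_SIP_def by blast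
  then show ?thesis
    using translate_SIP_meets_colour[of L u c] by blast
qed

lemma partition_avoiding_translates_SIP:
  "\<exists>B C. B \<union> C = A \<and> B \<inter> C = {} \<and> \<not> contains_translate_SIP B \<and> \<not> contains_translate_SIP C"
proof (intro exI conjI)
  let ?X = "{n. colour (nat n)}"
  show "A \<inter> ?X \<union> (A - ?X) = A" and "A \<inter> ?X \<inter> (A - ?X) = {}"
    by blast+
  show "\<not> contains_translate_SIP (A \<inter> ?X)"
    using contains_translate_SIP_meets_colour[of "A \<inter> ?X" False] by blast
  show "\<not> contains_translate_SIP (A - ?X)"
    using contains_translate_SIP_meets_colour[of "A - ?X" True] by blast
qed

lemma contains_translate_SIP_PosNat: "contains_translate_SIP PosNat"
proof -
  have "infinite PosNat"
    unfolding PosNat_def using infinite_Ici[of "1::int"] by (simp add: atLeast_def)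
  then show ?thesis
    unfolding contains_translate_SIP_def by (intro exI[of _ PosNat] exI[of _ 0]) auto
qed

theorem theorem4p7:
  shows "(\<forall>A. is_SIP_set A \<longrightarrow>
           (\<exists>B C. B \<union> C = A \<and> B \<inter> C = {} \<and>
                  \<not> contains_translate_SIP B \<and> \<not> contains_translate_SIP C))
       \<and> \<not> filterdual {B. B \<subseteq> PosNat \<and> contains_translate_SIP B}"
proof
  show "\<forall>A. is_SIP_set A \<longrightarrow>
           (\<exists>B C. B \<union> C = A \<and> B \<inter> C = {} \<and>
                  \<not> contains_translate_SIP B \<and> \<not> contains_translate_SIP C)"
    using partition_avoiding_translates_SIP by blast
  obtain B C where BC: "B \<union> C = PosNat" "\<not> contains_translate_SIP B" "\<not> contains_translate_SIP C"
    using partition_avoiding_translates_SIP[of PosNat] by blast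
  show "\<not> filterdual {B. B \<subseteq> PosNat \<and> contains_translate_SIP B}" (is "\<not> filterdual ?F")
  proof
    assume "filterdual ?F"
    then have "B \<union> C \<in> ?F \<Longrightarrow> B \<in> ?F \<or> C \<in> ?F"
      unfolding filterdual_def by blast
    moreover have "B \<union> C \<in> ?F"
      using BC(1) contains_translate_SIP_PosNat by simp
    ultimately show False
      using BC(2,3) by simp
  qed
qed

end
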